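(* Let $\tilde{\mathcal D}$ be a finite set of examples, let $\mathrm{sim}:\tilde{\mathcal D}\times\tilde{\mathcal D}\to\mathbb{R}$, let $C:\tilde{\mathcal D}\to[0,\infty)$, let $\tau\ge 0$, and let $\sigma:[0,\infty)\to\mathbb{R}$ be non-decreasing and concave with $\sigma(0)=0$. For $\mathcal S\subseteq\tilde{\mathcal D}$ and $x_i\in\tilde{\mathcal D}$ define $$\hat C_{\mathcal N}(x_i;\mathcal S)=\sum_{x_j\in\mathcal S}\mathbb 1_{[\mathrm{sim}(x_i,x_j)\ge\tau]}\,\mathrm{sim}(x_i,x_j)\,C(x_j),\qquad OBJ(\mathcal S)=\sum_{x_i\in\tilde{\mathcal D}}\sigma\big(\hat C_{\mathcal N}(x_i;\mathcal S)\big).$$ Then $OBJ$ is submodular: for all $\mathcal S\subset\mathcal S'\subseteq\tilde{\mathcal D}$ and all $x\in\tilde{\mathcal D}\setminus\mathcal S'$, $$OBJ(\mathcal S\cup\{x\})-OBJ(\mathcal S)\ge OBJ(\mathcal S'\cup\{x\})-OBJ(\mathcal S').$$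
   Context: In the paper, $\mathrm{sim}$ is the cosine similarity between embeddings of augmentations of two examples, $C$ is a prediction confidence (e.g. maximum softmax probability), $\tau$ is a neighborhood threshold and $\sigma$ is a utility function (e.g. the positive part of $\tanh$). *)

theory Defs
  imports "HOL-Analysis.Analysis"
begin

definition C_hat_N :: "('a \<Rightarrow> 'a \<Rightarrow> real) \<Rightarrow> ('a \<Rightarrow> real) \<Rightarrow> real \<Rightarrow> 'a set \<Rightarrow> 'a \<Rightarrow> real" where
  "C_hat_N sim C \<tau> S xi =
     (\<Sum>xj\<in>S. (if sim xi xj \<ge> \<tau> then 1 else 0) * sim xi xj * C xj)"

definition OBJ :: "'a set \<Rightarrow> ('a \<Rightarrow> 'a \<Rightarrow> real) \<Rightarrow> ('a \<Rightarrow> real) \<Rightarrow> real \<Rightarrow> (real \<Rightarrow> real) \<Rightarrow> 'a set \<Rightarrow> real" where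
  "OBJ D sim C \<tau> \<sigma> S = (\<Sum>xi\<in>D. \<sigma> (C_hat_N sim C \<tau> S xi))"

end

theory Submission
  imports Defs
begin

text \<open>Only concavity of \<sigma> is needed: each summand of OBJ is \<sigma> applied to a sum of
  nonnegative weights over S (nonnegative because sim xi y \<ge> \<tau> \<ge> 0 wherever the indicator
  is 1), and adding the weight of x to a larger sum raises a concave function by less.\<close>

lemma concave_on_increment_antimono:
  fixes f :: "real \<Rightarrow> real"
  assumes f: "concave_on I f" and I: "a \<in> I" "b + d \<in> I" and "a \<le> b" "0 \<le> d"
  shows "f (b + d) - f b \<le> f (a + d) - f a"
proof (cases "b + d = a")
  case True
  then have "d = 0" "b = a" using \<open>a \<le> b\<close> \<open>0 \<le> d\<close> by linarith+
  then show ?thesis by simp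
next
  case False
  define t where "t = d / (b + d - a)"
  have t: "0 \<le> t" "t \<le> 1" "t * (b + d - a) = d"
    using False \<open>a \<le> b\<close> \<open>0 \<le> d\<close> by (auto simp: t_def field_simps)
  \<comment> \<open>a + d and b are the convex combinations of a and b + d with weights t and 1 - t\<close>
  have "f (a + d) \<ge> (1 - t) * f a + t * f (b + d)"
    using concave_onD[OF f t(1,2) I] t(3) by (simp add: algebra_simps)
  moreover have "f b \<ge> t * f a + (1 - t) * f (b + d)"
    using concave_onD[OF f _ _ I, of "1 - t"] t by (simp add: algebra_simps)
  ultimately show ?thesis by (simp add: algebra_simps)
qed

lemma concave_of_sum_submodular:
  fixes f :: "real \<Rightarrow> real" and w :: "'a \<Rightarrow> real"
  assumes f: "concave_on {0..} f" and "finite T" "S \<subseteq> T" "x \<notin> T"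
    and w: "\<And>y. y \<in> insert x T \<Longrightarrow> w y \<ge> 0"
  shows "f (sum w (insert x T)) - f (sum w T) \<le> f (sum w (insert x S)) - f (sum w S)"
proof -
  have "finite S" using \<open>S \<subseteq> T\<close> \<open>finite T\<close> by (rule finite_subset)
  moreover have "x \<notin> S" using \<open>S \<subseteq> T\<close> \<open>x \<notin> T\<close> by blast
  moreover have "f (sum w T + w x) - f (sum w T) \<le> f (sum w S + w x) - f (sum w S)"
  proof (rule concave_on_increment_antimono[OF f])
    show "sum w S \<in> {0..}" using w \<open>S \<subseteq> T\<close> by (auto intro: sum_nonneg)
    show "sum w T + w x \<in> {0..}" using w by (auto intro: sum_nonneg add_nonneg_nonneg)
    show "sum w S \<le> sum w T" using w \<open>finite T\<close> \<open>S \<subseteq> T\<close> by (auto intro: sum_mono2)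
    show "0 \<le> w x" using w by simp
  qed
  ultimately show ?thesis using \<open>finite T\<close> \<open>x \<notin> T\<close> by (simp add: add.commute)
qed

theorem lemma6:
  fixes D :: "'a set" and sim :: "'a \<Rightarrow> 'a \<Rightarrow> real" and C :: "'a \<Rightarrow> real"
    and \<tau> :: real and \<sigma> :: "real \<Rightarrow> real" and S S' :: "'a set" and x :: 'a
  assumes "finite D"
    and "\<forall>y\<in>D. C y \<ge> 0"
    and "\<tau> \<ge> 0"
    and "mono_on {0..} \<sigma>"
    and "concave_on {0..} \<sigma>"
    and "\<sigma> 0 = 0"
    and "S \<subset> S'" and "S' \<subseteq> D"
    and "x \<in> D - S'"
  shows "OBJ D sim C \<tau> \<sigma> (S \<union> {x}) - OBJ D sim C \<tau> \<sigma> S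
           \<ge> OBJ D sim C \<tau> \<sigma> (S' \<union> {x}) - OBJ D sim C \<tau> \<sigma> S'"
proof -
  have "finite S'" using \<open>S' \<subseteq> D\<close> \<open>finite D\<close> by (rule finite_subset)
  have "\<sigma> (C_hat_N sim C \<tau> (insert x S') xi) - \<sigma> (C_hat_N sim C \<tau> S' xi)
      \<le> \<sigma> (C_hat_N sim C \<tau> (insert x S) xi) - \<sigma> (C_hat_N sim C \<tau> S xi)" for xi
    unfolding C_hat_N_def
  proof (rule concave_of_sum_submodular[OF \<open>concave_on {0..} \<sigma>\<close> \<open>finite S'\<close>])
    show "S \<subseteq> S'" "x \<notin> S'" using \<open>S \<subset> S'\<close> \<open>x \<in> D - S'\<close> by auto
    show "0 \<le> (if sim xi y \<ge> \<tau> then 1 else 0) * sim xi y * C y" if "y \<in> insert x S'" for y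
      using that assms(2,3,8,9) by auto
  qed
  then show ?thesis
    unfolding OBJ_def by (simp add: sum_subtractf[symmetric] sum_mono)
qed

end
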